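(* Let $F$ be a nonempty face of $V_0$ and $\lambda\in\Xi$. Then $\lambda\in\mathcal U(F)$ (i.e. $F\subseteq F_\lambda$) if and only if $N_\lambda\ge\phi(F)$ in $\mathcal{SC}(\mathcal M)$.
   Context: Let $\mathcal M$ be a regular matroid on a finite ground set $E$, represented by a totally unimodular matrix $M$ with columns $c_e$; $\mathcal F=\ker M\subseteq\mathbb R^E$ with Euclidean inner product, $\Lambda=\ker M\cap\mathbb Z^E$, $V_0=\{x\in\mathcal F:\|x\|\le\|x-\mu\|\ \forall\mu\in\Lambda\}$. A circuit in $\Lambda$ is a flow with coordinates in $\{-1,0,1\}$ whose support is a circuit (minimal dependent set of columns) of $\mathcal M$; $\Xi$ is the set of these. For $\gamma\in\Xi$, $F_\gamma=\{x\in\mathcal F:2\langle x,\gamma\rangle=\|\gamma\|^2\}$. An oriented submatroid is $(S,\varepsilon)$, $S\subseteq E$, $\varepsilon:S\to\{\pm1\}$; it is strongly connected if for every $e\in S$ there is $w\in\mathbb Z_{\ge0}^S$ with $w_e\ge1$ and $\sum_{f\in S}w_f\varepsilon_fc_f=0$. $\mathcal{SC}(\mathcal M)$ is the set of these, ordered by $(S,\varepsilon)\le(S',\varepsilon')$ iff $S'\subseteq S$ and $\varepsilon'=\varepsilon|_{S'}$. For $\lambda\in\Lambda$, $N_\lambda=(\operatorname{supp}\lambda,\ e\mapsto\operatorname{sgn}\lambda_e)$. For a nonempty face $F$ of $V_0$, $\mathcal U(F)=\{\gamma\in\Xi:F\subseteq F_\gamma\}$ and $\phi(F)=(S,\varepsilon)$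 with $S=\bigcup_{\gamma\in\mathcal U(F)}\operatorname{supp}\gamma$ and $\varepsilon_e=\operatorname{sgn}\gamma_e$ for any $\gamma\in\mathcal U(F)$ with $e\in\operatorname{supp}\gamma$ (this is well defined and lies in $\mathcal{SC}(\mathcal M)$). *)

theory Defs
  imports "HOL-Analysis.Analysis"
begin

text \<open>The ground set E is the finite type 'e (so E = UNIV);
 the matrix M has rows indexed by the finite type 'r and columns c_e = column e M.\<close>

definition det_sq :: "nat \<Rightarrow> (nat \<Rightarrow> nat \<Rightarrow> real) \<Rightarrow> real" where
  "det_sq k A = (\<Sum>p | p permutes {..<k}. of_int (sign p) * (\<Prod>i<k. A i (p i)))"

definition totally_unimodular :: "real^'e^'r \<Rightarrow> bool" where
  "totally_unimodular M \<longleftrightarrow>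
     (\<forall>k (f::nat \<Rightarrow> 'r) (g::nat \<Rightarrow> 'e). inj_on f {..<k} \<longrightarrow> inj_on g {..<k} \<longrightarrow>
        det_sq k (\<lambda>i j. M $ f i $ g j) \<in> {-1, 0, 1})"

definition flows :: "real^'e^'r \<Rightarrow> (real^'e) set" where
  "flows M = {x. M *v x = 0}"

definition lattice_flows :: "real^'e^'r \<Rightarrow> (real^'e) set" where
  "lattice_flows M = {x \<in> flows M. \<forall>e. x $ e \<in> \<int>}"

definition voronoi0 :: "real^'e^'r \<Rightarrow> (real^'e) set" where
  "voronoi0 M = {x \<in> flows M. \<forall>\<mu> \<in> lattice_flows M. norm x \<le> norm (x - \<mu>)}"

definition supp :: "real^'e \<Rightarrow> 'e set" where
  "supp x = {e. x $ e \<noteq> 0}"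

definition dependent_cols :: "real^'e^'r \<Rightarrow> 'e set \<Rightarrow> bool" where
  "dependent_cols M S \<longleftrightarrow>
     (\<exists>w :: 'e \<Rightarrow> real. (\<exists>e\<in>S. w e \<noteq> 0) \<and> (\<Sum>e\<in>S. w e *\<^sub>R column e M) = 0)"

definition matroid_circuit :: "real^'e^'r \<Rightarrow> 'e set \<Rightarrow> bool" where
  "matroid_circuit M S \<longleftrightarrow> dependent_cols M S \<and> (\<forall>T. T \<subset> S \<longrightarrow> \<not> dependent_cols M T)"

definition circuits :: "real^'e^'r \<Rightarrow> (real^'e) set" where
  "circuits M = {\<gamma> \<in> lattice_flows M. (\<forall>e. \<gamma> $ e \<in> {-1, 0, 1}) \<and> matroid_circuit M (supp \<gamma>)}"

definition hyperplane_F :: "real^'e^'r \<Rightarrow> real^'e \<Rightarrow> (real^'e) set" where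
  "hyperplane_F M \<gamma> = {x \<in> flows M. 2 * (x \<bullet> \<gamma>) = (norm \<gamma>)\<^sup>2}"

definition U_face :: "real^'e^'r \<Rightarrow> (real^'e) set \<Rightarrow> (real^'e) set" where
  "U_face M F = {\<gamma> \<in> circuits M. F \<subseteq> hyperplane_F M \<gamma>}"

text \<open>Oriented submatroids are pairs (S, eps); only the values of eps on S matter.\<close>
type_synonym 'e osub = "'e set \<times> ('e \<Rightarrow> real)"

definition strongly_connected :: "real^'e^'r \<Rightarrow> 'e osub \<Rightarrow> bool" where
  "strongly_connected M N \<longleftrightarrow> (case N of (S, eps) \<Rightarrow>
     (\<forall>e\<in>S. eps e \<in> {-1, 1}) \<and>
     (\<forall>e\<in>S. \<exists>w :: 'e \<Rightarrow> nat. w e \<ge> 1 \<and>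
         (\<Sum>f\<in>S. (real (w f) * eps f) *\<^sub>R column f M) = 0))"

definition SC :: "real^'e^'r \<Rightarrow> 'e osub set" where
  "SC M = {N. strongly_connected M N}"

definition sc_le :: "'e osub \<Rightarrow> 'e osub \<Rightarrow> bool" where
  "sc_le N N' \<longleftrightarrow> (case N of (S, eps) \<Rightarrow> case N' of (S', eps') \<Rightarrow>
     S' \<subseteq> S \<and> (\<forall>e\<in>S'. eps' e = eps e))"

definition N_of :: "real^'e \<Rightarrow> 'e osub" where
  "N_of lam = (supp lam, \<lambda>e. sgn (lam $ e))"

definition phi :: "real^'e^'r \<Rightarrow> (real^'e) set \<Rightarrow> 'e osub" where
  "phi M F = (\<Union>\<gamma>\<in>U_face M F. supp \<gamma>,
     \<lambda>e. if e \<in> (\<Union>\<gamma>\<in>U_face M F. supp \<gamma>)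
          then sgn ((SOME \<gamma>. \<gamma> \<in> U_face M F \<and> e \<in> supp \<gamma>) $ e) else 0)"

end

theory Submission
  imports Defs "Jordan_Normal_Form.Determinant"
begin

text \<open>By total unimodularity, every nonzero flow \<open>\<mu>\<close> dominates a conformal flow with entries in
\<open>{-1,0,1}\<close>: Cramer's rule applied to a support-minimal conformal flow. Peeling off such flows
gives \<open>2\<langle>x,\<mu>\<rangle> \<le> \<parallel>\<mu>\<parallel>\<^sub>1\<close> for every \<open>x \<in> V\<^sub>0\<close> and every lattice flow \<open>\<mu>\<close>, and for a circuit \<open>\<gamma>\<close>
the hyperplane \<open>F\<^sub>\<gamma>\<close> is exactly where this bound is tight. If two tight circuits were not
conformal, their sum would violate the bound, so the circuits of \<open>\<U>(F)\<close> are pairwise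
conformal and \<open>\<phi>(F)\<close> records their common signs. Conversely, if \<open>\<lambda>\<close> is covered with matching
signs by circuits of \<open>\<U>(F)\<close>, their sum \<open>\<sigma>\<close> is tight on \<open>F\<close> and splits as
\<open>\<sigma> = \<lambda> + (\<sigma> - \<lambda>)\<close> with additive \<open>\<ell>\<^sub>1\<close>-norm, so tightness passes to \<open>\<lambda>\<close>.\<close>

no_notation Matrix.vec_index (infixl \<open>$\<close> 100)
no_notation Matrix.scalar_prod (infix \<open>\<bullet>\<close> 70)

section \<open>Minors of totally unimodular matrices\<close>

lemma det_sq_eq_det: "det_sq k A = Determinant.det (Matrix.mat k k (\<lambda>(i,j). A i j))"
proof -
  have "Determinant.det (Matrix.mat k k (\<lambda>(i,j). A i j)) =
    (\<Sum>p \<in> {p. p permutes {0 ..< k}}. signof p * (\<Prod>i = 0 ..< k. Matrix.mat k k (\<lambda>(i,j). A i j) $$ (i, p i)))"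
    by (rule det_def') auto
  also have "\<dots> = det_sq k A"
    unfolding det_sq_def lessThan_atLeast0
    by (intro sum.cong refl arg_cong2[where f="(*)"] prod.cong)
       (auto intro!: index_mat simp: permutes_in_image)
  finally show ?thesis ..
qed

lemma totally_unimodular_minor:
  fixes M :: "real^'e::finite^'r::finite"
  assumes "totally_unimodular M" "inj_on f {..<k}" "inj_on g {..<k}"
  shows "Determinant.det (Matrix.mat k k (\<lambda>(i,j). M $ f i $ g j)) \<in> {-1,0,1}"
  using assms unfolding totally_unimodular_def det_sq_eq_det by simp

lemma inj_on_rows_if_det_nonzero:
  assumes "Determinant.det (Matrix.mat k k (\<lambda>(i,j). a (f i) j)) \<noteq> (0::real)"
  shows "inj_on f {..<k}"
proof (rule inj_onI, rule ccontr)
  fix i j assume "i \<in> {..<k}" "j \<in> {..<k}" "f i = f j" "i \<noteq> j"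
  then have "Determinant.det (Matrix.mat k k (\<lambda>(i,j). a (f i) j)) = 0"
    by (intro det_identical_rows[of _ k i j]) (auto intro!: eq_vecI)
  with assms show False by simp
qed

text \<open>Laplace expansion of each vanishing \<open>(k+1)\<close>-minor along its extra row \<open>i\<close>; as \<open>i\<close> ranges
over all rows, this gives the relation coordinatewise.\<close>
lemma cofactor_relation_if_minors_vanish:
  fixes v :: "nat \<Rightarrow> real^'r"
  assumes "\<And>i. Determinant.det (Matrix.mat (Suc k) (Suc k) (\<lambda>(a,b). v b $ (f(k:=i)) a)) = 0"
  defines "c b \<equiv> (-1)^(k+b) *
    Determinant.det (Matrix.mat k k (\<lambda>(i,j). v (if j < b then j else Suc j) $ f i))"
  shows "(\<Sum>b<Suc k. c b *\<^sub>R v b) = 0"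
proof (subst Finite_Cartesian_Product.vec_eq_iff, rule allI)
  fix i
  let ?B = "Matrix.mat (Suc k) (Suc k) (\<lambda>(a,b). v b $ (f(k:=i)) a)"
  have "0 = Determinant.det ?B" using assms(1) by simp
  also have "\<dots> = (\<Sum>b<Suc k. ?B $$ (k,b) * cofactor ?B k b)"
    by (rule laplace_expansion_row) auto
  also have "\<dots> = (\<Sum>b<Suc k. c b * v b $ i)"
  proof (rule sum.cong[OF refl])
    fix b assume b: "b \<in> {..<Suc k}"
    have "mat_delete ?B k b = Matrix.mat k k (\<lambda>(i,j). v (if j < b then j else Suc j) $ f i)"
      unfolding mat_delete_def by (rule cong_mat) auto
    then show "?B $$ (k,b) * cofactor ?B k b = c b * v b $ i"
      using b unfolding cofactor_def c_def by simp
  qed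
  finally show "(\<Sum>b<Suc k. c b *\<^sub>R v b) $ i = 0 $ i" by (simp add: mult.commute)
qed

lemma exists_nonsingular_row_selection:
  fixes v :: "nat \<Rightarrow> real^'r"
  assumes "\<And>w. (\<Sum>j<k. w j *\<^sub>R v j) = 0 \<Longrightarrow> \<forall>j<k. w j = 0"
  shows "\<exists>f. Determinant.det (Matrix.mat k k (\<lambda>(i,j). v j $ f i)) \<noteq> 0"
  using assms
proof (induction k)
  case 0
  show ?case by (simp add: det_sq_eq_det[symmetric] det_sq_def)
next
  case (Suc k)
  have "\<forall>j<k. w j = 0" if "(\<Sum>j<k. w j *\<^sub>R v j) = 0" for w
  proof -
    have "(\<Sum>j<Suc k. (w(k:=0)) j *\<^sub>R v j) = 0" using that by simp
    then show ?thesis using Suc.prems by (metis fun_upd_other less_SucI less_irrefl_nat)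
  qed
  then obtain f where f: "Determinant.det (Matrix.mat k k (\<lambda>(i,j). v j $ f i)) \<noteq> 0"
    using Suc.IH by blast
  show ?case
  proof (rule ccontr)
    define c where "c b = (-1)^(k+b) *
      Determinant.det (Matrix.mat k k (\<lambda>(i,j). v (if j < b then j else Suc j) $ f i))" for b
    assume "\<not> ?case"
    then have "(\<Sum>b<Suc k. c b *\<^sub>R v b) = 0"
      unfolding c_def by (intro cofactor_relation_if_minors_vanish) blast
    with Suc.prems have "c k = 0" by blast
    moreover have "Matrix.mat k k (\<lambda>(i,j). v (if j < k then j else Suc j) $ f i) =
        Matrix.mat k k (\<lambda>(i,j). v j $ f i)"
      by (rule cong_mat) auto
    then have "c k = Determinant.det (Matrix.mat k k (\<lambda>(i,j). v j $ f i))"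
      by (simp add: c_def mult_2[symmetric])
    ultimately show False using f by simp
  qed
qed

section \<open>Elementary flows of a totally unimodular matrix\<close>

lemma zero_less_mult_trans:
  fixes a b c :: real
  shows "0 < a * b \<Longrightarrow> 0 < b * c \<Longrightarrow> 0 < a * c"
  by (auto simp: zero_less_mult_iff)

definition elementary_flow :: "real^'e^'r \<Rightarrow> real^'e \<Rightarrow> bool" where
  "elementary_flow M y \<longleftrightarrow>
     M *v y = 0 \<and> y \<noteq> 0 \<and> (\<forall>z. M *v z = 0 \<longrightarrow> z \<noteq> 0 \<longrightarrow> \<not> supp z \<subset> supp y)"

lemma cramer_ratio_unimodular:
  fixes M :: "real^'e::finite^'r::finite"
  assumes TU: "totally_unimodular M"
    and f: "inj_on f {..<k}" and g: "inj_on g {..<k}" and e0: "e0 \<notin> g ` {..<k}"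
    and nonsingular: "Determinant.det (Matrix.mat k k (\<lambda>(i,j). M $ f i $ g j)) \<noteq> 0"
    and y: "M *v y = 0" and supp_y: "supp y \<subseteq> insert e0 (g ` {..<k})" and y0: "y $ e0 \<noteq> 0"
    and j: "j < k"
  shows "y $ g j / y $ e0 \<in> {-1,0,1}"
proof -
  define A where "A = Matrix.mat k k (\<lambda>(i,j). M $ f i $ g j)"
  define x where "x = Matrix.vec k (\<lambda>j. - y $ g j / y $ e0)"
  have row_eq: "(\<Sum>j<k. M $ f i $ g j * y $ g j) = - M $ f i $ e0 * y $ e0" for i
  proof -
    have "0 = (\<Sum>e\<in>UNIV. M $ f i $ e * y $ e)"
      using y by (simp add: matrix_vector_mult_def Finite_Cartesian_Product.vec_eq_iff)
    also have "\<dots> = (\<Sum>e\<in>insert e0 (g ` {..<k}). M $ f i $ e * y $ e)"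
      using supp_y by (intro sum.mono_neutral_right) (auto simp: supp_def)
    also have "\<dots> = M $ f i $ e0 * y $ e0 + (\<Sum>j<k. M $ f i $ g j * y $ g j)"
      using e0 by (simp add: sum.reindex[OF g])
    finally show ?thesis by linarith
  qed
  have Ax: "A *\<^sub>v x = Matrix.vec k (\<lambda>i. M $ f i $ e0)"
  proof (rule eq_vecI)
    fix i assume "i < dim_vec (Matrix.vec k (\<lambda>i. M $ f i $ e0))"
    then have i: "i < k" by simp
    have "vec_index (A *\<^sub>v x) i = - (\<Sum>j<k. M $ f i $ g j * y $ g j) / y $ e0"
      using i by (simp add: A_def x_def Matrix.scalar_prod_def lessThan_atLeast0
          sum_divide_distrib sum_negf)
    also have "\<dots> = M $ f i $ e0" using row_eq[of i] y0 by simp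
    finally show "vec_index (A *\<^sub>v x) i = vec_index (Matrix.vec k (\<lambda>i. M $ f i $ e0)) i"
      using i by simp
  qed (simp add: A_def)
  have "replace_col A (A *\<^sub>v x) j = Matrix.mat k k (\<lambda>(i,j'). M $ f i $ (g(j:=e0)) j')"
    unfolding replace_col_def Ax by (rule eq_matI) (auto simp: A_def)
  moreover have "Determinant.det (replace_col A (A *\<^sub>v x) j) = vec_index x j * Determinant.det A"
    by (rule cramer_lemma_mat) (auto simp: A_def x_def j)
  ultimately have "vec_index x j * Determinant.det A \<in> {-1,0,1}"
    using totally_unimodular_minor[OF TU f inj_on_fun_updI[OF g e0, of j]] by simp
  moreover have "Determinant.det A \<in> {-1,1}"
    using totally_unimodular_minor[OF TU f g] nonsingular unfolding A_def by auto
  ultimately have "vec_index x j \<in> {-1,0,1}" by auto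
  then show ?thesis using j by (auto simp: x_def)
qed

lemma elementary_flow_independent_columns:
  assumes elem: "elementary_flow M y" and y0: "y $ e0 \<noteq> 0"
    and g: "inj_on g {..<k}" "g ` {..<k} = supp y - {e0}"
    and rel: "(\<Sum>j<k. w j *\<^sub>R column (g j) M) = 0" and j0: "j0 < k"
  shows "w j0 = 0"
proof (rule ccontr)
  assume "w j0 \<noteq> 0"
  define C where "C = supp y - {e0}"
  define z where "z = (\<chi> e. if e \<in> C then w (inv_into {..<k} g e) else 0)"
  have "M *v z = (\<Sum>e\<in>UNIV. (z $ e) *s column e M)" by (rule matrix_mult_sum)
  also have "\<dots> = (\<Sum>e\<in>C. w (inv_into {..<k} g e) *\<^sub>R column e M)"
    by (rule sum.mono_neutral_cong_right) (auto simp: z_def scalar_mult_eq_scaleR)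
  also have "\<dots> = (\<Sum>j<k. w (inv_into {..<k} g (g j)) *\<^sub>R column (g j) M)"
    unfolding C_def g(2)[symmetric] by (simp add: sum.reindex[OF g(1)])
  also have "\<dots> = (\<Sum>j<k. w j *\<^sub>R column (g j) M)"
    using g(1) by (intro sum.cong) (auto simp: inv_into_f_f)
  finally have "M *v z = 0" using rel by simp
  moreover have "z $ g j0 = w j0" using j0 g by (auto simp: z_def C_def inv_into_f_f)
  then have "z \<noteq> 0" using \<open>w j0 \<noteq> 0\<close> by auto
  moreover have "supp z \<subset> supp y"
    using y0 by (auto simp: supp_def z_def C_def)
  ultimately show False using elem by (auto simp: elementary_flow_def)
qed

lemma elementary_flow_ratio_unimodular:
  fixes M :: "real^'e::finite^'r::finite"
  assumes TU: "totally_unimodular M" and elem: "elementary_flow M y" and y0: "y $ e0 \<noteq> 0"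
  shows "y $ e / y $ e0 \<in> {-1,0,1}"
proof -
  obtain g where g: "bij_betw g {..<card (supp y - {e0})} (supp y - {e0})"
    using ex_bij_betw_nat_finite[of "supp y - {e0}"] by (auto simp: lessThan_atLeast0)
  define k where "k = card (supp y - {e0})"
  have ginj: "inj_on g {..<k}" and gim: "g ` {..<k} = supp y - {e0}"
    using g by (auto simp: bij_betw_def k_def)
  obtain f where "Determinant.det (Matrix.mat k k (\<lambda>(i,j). column (g j) M $ f i)) \<noteq> 0"
    using exists_nonsingular_row_selection elementary_flow_independent_columns[OF elem y0 ginj gim]
    by metis
  then have f: "Determinant.det (Matrix.mat k k (\<lambda>(i,j). M $ f i $ g j)) \<noteq> 0"
    by (simp add: column_def)
  have finj: "inj_on f {..<k}"
    by (rule inj_on_rows_if_det_nonzero[of k "\<lambda>r j. M $ r $ g j"]) (use f in simp)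
  have "M *v y = 0" using elem by (simp add: elementary_flow_def)
  consider "e = e0" | "e \<notin> supp y" | j where "j < k" "e = g j"
    using gim by (cases "e \<in> supp y - {e0}") auto
  then show ?thesis
  proof cases
    case 3
    then show ?thesis
      using cramer_ratio_unimodular[OF TU finj ginj _ f \<open>M *v y = 0\<close> _ y0] gim by auto
  qed (use y0 in \<open>auto simp: supp_def\<close>)
qed

text \<open>Subtracting the largest multiple of \<open>z\<close> that keeps the signs of \<open>y\<close> kills at least one
coordinate.\<close>
lemma conformal_flow_by_elimination:
  assumes y: "M *v y = 0" and z: "M *v z = 0" and sub: "supp z \<subset> supp y"
    and e1: "0 < y $ e1 / z $ e1"
  shows "\<exists>y'. M *v y' = 0 \<and> y' \<noteq> 0 \<and> supp y' \<subset> supp y \<and> (\<forall>e. y' $ e \<noteq> 0 \<longrightarrow> 0 < y' $ e * y $ e)"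
proof -
  define Q where "Q = {e. 0 < y $ e / z $ e}"
  define t where "t = Min ((\<lambda>e. y $ e / z $ e) ` Q)"
  have "e1 \<in> Q" using e1 by (simp add: Q_def)
  then have "t \<in> (\<lambda>e. y $ e / z $ e) ` Q" unfolding t_def by (intro Min_in) auto
  then obtain e2 where e2: "e2 \<in> Q" "t = y $ e2 / z $ e2" by auto
  have t_le: "t \<le> y $ e / z $ e" if "e \<in> Q" for e
    unfolding t_def using that by (intro Min_le) auto
  have "0 < t" using e2 by (simp add: Q_def)
  define y' where "y' = y - t *\<^sub>R z"
  have y'_conf: "0 \<le> y' $ e * y $ e" for e
  proof (cases "z $ e = 0")
    case False
    define r where "r = y $ e / z $ e"
    have "y' $ e * y $ e = ((r - t) * r) * (z $ e)\<^sup>2"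
      using False by (simp add: y'_def r_def field_simps power2_eq_square)
    moreover have "0 \<le> (r - t) * r"
    proof (cases "0 < r")
      case True
      then have "t \<le> r" using t_le[of e] by (simp add: Q_def r_def)
      with True show ?thesis by simp
    qed (use \<open>0 < t\<close> in \<open>simp add: mult_nonpos_nonpos\<close>)
    ultimately show ?thesis by simp
  qed (simp add: y'_def)
  have y'_supp: "y' $ e = 0" if "y $ e = 0" for e
    using that sub by (auto simp: y'_def supp_def)
  have "M *v y' = 0"
    using y z by (simp add: y'_def matrix_vector_mult_diff_distrib matrix_vector_mult_scaleR)
  moreover obtain e3 where "y $ e3 \<noteq> 0" "z $ e3 = 0" using sub by (auto simp: supp_def)
  then have "y' $ e3 \<noteq> 0" by (simp add: y'_def)
  then have "y' \<noteq> 0" by auto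
  moreover have "supp y' \<subset> supp y"
  proof -
    have "y $ e2 \<noteq> 0" "z $ e2 \<noteq> 0" using e2 by (auto simp: Q_def)
    then have "y' $ e2 = 0" "y $ e2 \<noteq> 0" using e2 by (auto simp: y'_def)
    then show ?thesis using y'_supp by (auto simp: supp_def)
  qed
  moreover have "0 < y' $ e * y $ e" if "y' $ e \<noteq> 0" for e
    using y'_conf[of e] y'_supp[of e] that by (auto simp: le_less)
  ultimately show ?thesis by blast
qed

lemma conformal_flow_of_smaller_support:
  assumes y: "M *v y = 0" and z: "M *v z = 0" "z \<noteq> 0" and sub: "supp z \<subset> supp y"
  shows "\<exists>y'. M *v y' = 0 \<and> y' \<noteq> 0 \<and> supp y' \<subset> supp y \<and> (\<forall>e. y' $ e \<noteq> 0 \<longrightarrow> 0 < y' $ e * y $ e)"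
proof -
  obtain e1 where "z $ e1 \<noteq> 0" using z by (auto simp: Finite_Cartesian_Product.vec_eq_iff)
  moreover have "y $ e1 \<noteq> 0" using sub calculation by (auto simp: supp_def)
  ultimately consider "0 < y $ e1 / z $ e1" | "0 < y $ e1 / (- z) $ e1"
    by (auto simp: zero_less_divide_iff divide_less_0_iff linorder_neq_iff)
  then show ?thesis
  proof cases
    case 2
    moreover have "M *v (- z) = 0" using matrix_vector_mult_diff_distrib[of M 0 z] z by simp
    moreover have "supp (- z) = supp z" by (simp add: supp_def)
    ultimately show ?thesis using conformal_flow_by_elimination[OF y] sub by metis
  qed (rule conformal_flow_by_elimination[OF y z(1) sub])
qed

lemma exists_conformal_elementary_flow:
  assumes "M *v \<mu> = 0" "\<mu> \<noteq> 0"
  shows "\<exists>y. elementary_flow M y \<and> (\<forall>e. y $ e \<noteq> 0 \<longrightarrow> 0 < y $ e * \<mu> $ e)"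
proof -
  define P where "P y \<longleftrightarrow> M *v y = 0 \<and> y \<noteq> 0 \<and> (\<forall>e. y $ e \<noteq> 0 \<longrightarrow> 0 < y $ e * \<mu> $ e)" for y
  have "P \<mu>" using assms by (auto simp: P_def zero_less_mult_iff linorder_neq_iff)
  then obtain y where Py: "P y" and least: "\<And>z. P z \<Longrightarrow> card (supp y) \<le> card (supp z)"
    using ex_has_least_nat[of P \<mu> "\<lambda>y. card (supp y)"] by blast
  have "\<not> supp z \<subset> supp y" if z: "M *v z = 0" "z \<noteq> 0" for z
  proof
    assume "supp z \<subset> supp y"
    moreover have "M *v y = 0" using Py by (simp add: P_def)
    ultimately obtain y' where y': "M *v y' = 0" "y' \<noteq> 0" "supp y' \<subset> supp y"
      and conf: "\<And>e. y' $ e \<noteq> 0 \<Longrightarrow> 0 < y' $ e * y $ e"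
      using conformal_flow_of_smaller_support[of M y z] z by blast
    have "0 < y' $ e * \<mu> $ e" if "y' $ e \<noteq> 0" for e
    proof -
      have "y $ e \<noteq> 0" using conf[OF that] by auto
      then show ?thesis
        using conf[OF that] Py zero_less_mult_trans by (auto simp: P_def)
    qed
    with y' have "P y'" by (simp add: P_def)
    moreover have "card (supp y') < card (supp y)" using y' by (intro psubset_card_mono) auto
    ultimately show False using least by fastforce
  qed
  with Py show ?thesis by (auto simp: P_def elementary_flow_def)
qed

definition ternary :: "real^'e \<Rightarrow> bool" where
  "ternary v \<longleftrightarrow> (\<forall>e. v $ e \<in> {-1,0,1})"

lemma ternary_Ints: "ternary v \<Longrightarrow> v $ e \<in> \<int>"
  unfolding ternary_def by (metis Ints_0 Ints_1 Ints_minus insertE singletonD)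

lemma exists_conformal_ternary_flow:
  fixes M :: "real^'e::finite^'r::finite"
  assumes TU: "totally_unimodular M" and \<mu>: "M *v \<mu> = 0" "\<mu> \<noteq> 0"
  shows "\<exists>\<nu>. M *v \<nu> = 0 \<and> \<nu> \<noteq> 0 \<and> ternary \<nu> \<and> (\<forall>e. \<nu> $ e \<noteq> 0 \<longrightarrow> 0 < \<nu> $ e * \<mu> $ e)"
proof -
  obtain y where elem: "elementary_flow M y" and conf: "\<And>e. y $ e \<noteq> 0 \<Longrightarrow> 0 < y $ e * \<mu> $ e"
    using exists_conformal_elementary_flow[OF \<mu>] by blast
  obtain e0 where y0: "y $ e0 \<noteq> 0" using elem by (auto simp: elementary_flow_def Finite_Cartesian_Product.vec_eq_iff)
  define \<nu> where "\<nu> = (1 / \<bar>y $ e0\<bar>) *\<^sub>R y"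
  have \<nu>_e: "\<nu> $ e = sgn (y $ e0) * (y $ e / y $ e0)" for e
    using y0 by (cases "0 < y $ e0") (auto simp: \<nu>_def)
  have "ternary \<nu>"
  proof (unfold ternary_def, rule allI)
    fix e
    have mult: "s * r \<in> {-1,0,1}" if "s \<in> {-1,1}" "r \<in> {-1,0,1}" for s r :: real
      using that by auto
    show "\<nu> $ e \<in> {-1,0,1}"
      unfolding \<nu>_e by (rule mult[OF _ elementary_flow_ratio_unimodular[OF TU elem y0]])
        (use y0 in \<open>simp add: sgn_real_def\<close>)
  qed
  moreover have "M *v \<nu> = 0"
    using elem by (simp add: \<nu>_def matrix_vector_mult_scaleR elementary_flow_def)
  moreover have "\<nu> \<noteq> 0" using y0 \<nu>_e[of e0] by (auto simp: sgn_real_def split: if_splits)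
  moreover have "0 < \<nu> $ e * \<mu> $ e" if "\<nu> $ e \<noteq> 0" for e
  proof -
    have "y $ e \<noteq> 0" using that by (auto simp: \<nu>_def)
    then show ?thesis using conf y0 by (simp add: \<nu>_def)
  qed
  ultimately show ?thesis by blast
qed

section \<open>The \<open>\<ell>\<^sub>1\<close>-bound on the Voronoi cell\<close>

definition l1_norm :: "real^'e::finite \<Rightarrow> real" where
  "l1_norm v = (\<Sum>e\<in>UNIV. \<bar>v $ e\<bar>)"

definition conformal :: "real^'e \<Rightarrow> real^'e \<Rightarrow> bool" where
  "conformal u v \<longleftrightarrow> (\<forall>e. 0 \<le> u $ e * v $ e)"

lemma l1_norm_nonneg: "0 \<le> l1_norm v"
  by (simp add: l1_norm_def sum_nonneg)

lemma l1_norm_eq_0_iff: "l1_norm v = 0 \<longleftrightarrow> v = 0"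
  by (simp add: l1_norm_def sum_nonneg_eq_0_iff Finite_Cartesian_Product.vec_eq_iff)

lemma l1_norm_add_conformal:
  assumes "conformal u v"
  shows "l1_norm (u + v) = l1_norm u + l1_norm v"
proof -
  have "\<bar>u $ e + v $ e\<bar> = \<bar>u $ e\<bar> + \<bar>v $ e\<bar>" for e
    using assms[unfolded conformal_def, rule_format, of e]
    by (auto simp: abs_if zero_le_mult_iff)
  then show ?thesis by (simp add: l1_norm_def sum.distrib)
qed

lemma conformal_if_l1_norm_add:
  assumes "l1_norm (u + v) = l1_norm u + l1_norm v"
  shows "conformal u v"
proof (rule ccontr)
  assume "\<not> conformal u v"
  then obtain e where "u $ e * v $ e < 0" by (auto simp: conformal_def not_le)
  then have "\<bar>u $ e + v $ e\<bar> < \<bar>u $ e\<bar> + \<bar>v $ e\<bar>" by (auto simp: abs_if mult_less_0_iff)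
  then have "(\<Sum>e\<in>UNIV. \<bar>u $ e + v $ e\<bar>) < (\<Sum>e\<in>UNIV. \<bar>u $ e\<bar> + \<bar>v $ e\<bar>)"
    by (intro sum_strict_mono_ex1) (auto simp: abs_triangle_ineq)
  with assms show False by (simp add: l1_norm_def sum.distrib)
qed

lemma norm_sq_eq_l1_norm:
  assumes "ternary v"
  shows "(norm v)\<^sup>2 = l1_norm v"
proof -
  have "v $ e * v $ e = \<bar>v $ e\<bar>" for e
    using assms[unfolded ternary_def, rule_format, of e] by auto
  then show ?thesis by (simp add: power2_norm_eq_inner inner_vec_def l1_norm_def)
qed

lemma conformal_diff_ternary:
  assumes \<nu>: "ternary \<nu>" and \<sigma>: "\<And>e. \<sigma> $ e \<in> \<int>"
    and sign: "\<And>e. \<nu> $ e \<noteq> 0 \<Longrightarrow> 0 < \<nu> $ e * \<sigma> $ e"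
  shows "conformal \<nu> (\<sigma> - \<nu>)"
  unfolding conformal_def
proof
  fix e
  show "0 \<le> \<nu> $ e * (\<sigma> - \<nu>) $ e"
  proof (cases "\<nu> $ e = 0")
    case False
    have "\<nu> $ e \<in> {-1,1}" using \<nu>[unfolded ternary_def, rule_format, of e] False by auto
    moreover have "1 \<le> \<bar>\<sigma> $ e\<bar>" using sign[OF False] Ints_nonzero_abs_ge1[OF \<sigma>] by force
    ultimately show ?thesis using sign[OF False] by (auto simp: zero_less_mult_iff)
  qed simp
qed

lemma lattice_flows_add: "\<mu> \<in> lattice_flows M \<Longrightarrow> \<nu> \<in> lattice_flows M \<Longrightarrow> \<mu> + \<nu> \<in> lattice_flows M"
  by (auto simp: lattice_flows_def flows_def matrix_vector_right_distrib)

lemma lattice_flows_diff: "\<mu> \<in> lattice_flows M \<Longrightarrow> \<nu> \<in> lattice_flows M \<Longrightarrow> \<mu> - \<nu> \<in> lattice_flows M"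
  by (auto simp: lattice_flows_def flows_def matrix_vector_mult_diff_distrib)

lemma lattice_flows_sum:
  assumes "finite G" "G \<subseteq> lattice_flows M"
  shows "\<Sum>G \<in> lattice_flows M"
  using assms
proof (induction G rule: finite_induct)
  case empty
  show ?case by (simp add: lattice_flows_def flows_def)
qed (simp add: lattice_flows_add)

lemma exists_conformal_ternary_summand:
  fixes M :: "real^'e::finite^'r::finite"
  assumes TU: "totally_unimodular M" and \<mu>: "\<mu> \<in> lattice_flows M" "\<mu> \<noteq> 0"
  shows "\<exists>\<nu>\<in>lattice_flows M. ternary \<nu> \<and> \<nu> \<noteq> 0 \<and> conformal \<nu> (\<mu> - \<nu>)"
proof -
  have "M *v \<mu> = 0" and \<mu>_int: "\<And>e. \<mu> $ e \<in> \<int>" using \<mu> by (auto simp: lattice_flows_def flows_def)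
  then obtain \<nu> where "M *v \<nu> = 0" "\<nu> \<noteq> 0" "ternary \<nu>"
    and sign: "\<And>e. \<nu> $ e \<noteq> 0 \<Longrightarrow> 0 < \<nu> $ e * \<mu> $ e"
    using exists_conformal_ternary_flow[OF TU _ \<mu>(2)] by blast
  moreover from this have "\<nu> \<in> lattice_flows M"
    using ternary_Ints[of \<nu>] by (simp add: lattice_flows_def flows_def)
  moreover have "conformal \<nu> (\<mu> - \<nu>)" using conformal_diff_ternary \<open>ternary \<nu>\<close> \<mu>_int sign .
  ultimately show ?thesis by blast
qed

lemma voronoi0_inner_le_norm_sq:
  assumes "x \<in> voronoi0 M" "\<mu> \<in> lattice_flows M"
  shows "2 * (x \<bullet> \<mu>) \<le> (norm \<mu>)\<^sup>2"
proof -
  have "(norm x)\<^sup>2 \<le> (norm (x - \<mu>))\<^sup>2" using assms by (auto simp: voronoi0_def power_mono)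
  then show ?thesis by (simp add: power2_norm_eq_inner inner_diff_left inner_diff_right inner_commute)
qed

text \<open>Induction on an integer bound for \<open>\<parallel>\<mu>\<parallel>\<^sub>1\<close>: split off a conformal ternary flow \<open>\<nu>\<close>,
for which the claim is the Voronoi inequality, and recurse on \<open>\<mu> - \<nu>\<close>.\<close>
lemma voronoi0_inner_le_l1_norm:
  fixes M :: "real^'e::finite^'r::finite"
  assumes TU: "totally_unimodular M" and x: "x \<in> voronoi0 M" and \<mu>: "\<mu> \<in> lattice_flows M"
  shows "2 * (x \<bullet> \<mu>) \<le> l1_norm \<mu>"
proof -
  obtain n where "l1_norm \<mu> \<le> real n" using real_arch_simple by blast
  with \<mu> show ?thesis
  proof (induction n arbitrary: \<mu>)
    case (Suc n)
    show ?case
    proof (cases "\<mu> = 0")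
      case False
      then obtain \<nu> where \<nu>: "\<nu> \<in> lattice_flows M" and tern: "ternary \<nu>" and "\<nu> \<noteq> 0"
        and "conformal \<nu> (\<mu> - \<nu>)"
        using exists_conformal_ternary_summand[OF TU Suc.prems(1)] by blast
      then have l1_split: "l1_norm \<mu> = l1_norm \<nu> + l1_norm (\<mu> - \<nu>)"
        using l1_norm_add_conformal[of \<nu> "\<mu> - \<nu>"] by simp
      obtain e where "\<nu> $ e \<noteq> 0" using \<open>\<nu> \<noteq> 0\<close> by (auto simp: Finite_Cartesian_Product.vec_eq_iff)
      then have "1 \<le> l1_norm \<nu>"
        using tern[unfolded ternary_def, rule_format, of e] member_le_sum[of e UNIV "\<lambda>e. \<bar>\<nu> $ e\<bar>"]
        by (auto simp: l1_norm_def)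
      then have "2 * (x \<bullet> (\<mu> - \<nu>)) \<le> l1_norm (\<mu> - \<nu>)"
        using Suc l1_split lattice_flows_diff[OF Suc.prems(1) \<nu>] by auto
      moreover have "2 * (x \<bullet> \<nu>) \<le> l1_norm \<nu>"
        using voronoi0_inner_le_norm_sq[OF x \<nu>] norm_sq_eq_l1_norm[OF tern] by simp
      ultimately show ?thesis using l1_split by (simp add: inner_diff_right)
    qed (simp add: l1_norm_def)
  next
    case 0
    then have "\<mu> = 0" using l1_norm_nonneg[of \<mu>] l1_norm_eq_0_iff[of \<mu>] by simp
    then show ?case by (simp add: l1_norm_def)
  qed
qed

section \<open>Tight lattice flows\<close>

lemma tight_summand:
  fixes M :: "real^'e::finite^'r::finite"
  assumes TU: "totally_unimodular M" and x: "x \<in> voronoi0 M"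
    and \<mu>: "\<mu> \<in> lattice_flows M" and \<nu>: "\<nu> \<in> lattice_flows M" and "conformal \<mu> \<nu>"
    and tight: "2 * (x \<bullet> (\<mu> + \<nu>)) = l1_norm (\<mu> + \<nu>)"
  shows "2 * (x \<bullet> \<mu>) = l1_norm \<mu>"
  using voronoi0_inner_le_l1_norm[OF TU x \<mu>] voronoi0_inner_le_l1_norm[OF TU x \<nu>]
    tight l1_norm_add_conformal[OF \<open>conformal \<mu> \<nu>\<close>]
  by (simp add: inner_add_right)

lemma tight_flows_conformal:
  fixes M :: "real^'e::finite^'r::finite"
  assumes TU: "totally_unimodular M" and x: "x \<in> voronoi0 M"
    and \<gamma>: "\<gamma> \<in> lattice_flows M" "2 * (x \<bullet> \<gamma>) = l1_norm \<gamma>"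
    and \<gamma>': "\<gamma>' \<in> lattice_flows M" "2 * (x \<bullet> \<gamma>') = l1_norm \<gamma>'"
  shows "conformal \<gamma> \<gamma>'"
proof (rule conformal_if_l1_norm_add, rule antisym)
  have "l1_norm (\<gamma> + \<gamma>') \<le> (\<Sum>e\<in>UNIV. \<bar>\<gamma> $ e\<bar> + \<bar>\<gamma>' $ e\<bar>)"
    unfolding l1_norm_def by (intro sum_mono) (simp add: abs_triangle_ineq)
  then show "l1_norm (\<gamma> + \<gamma>') \<le> l1_norm \<gamma> + l1_norm \<gamma>'" by (simp add: l1_norm_def sum.distrib)
  show "l1_norm \<gamma> + l1_norm \<gamma>' \<le> l1_norm (\<gamma> + \<gamma>')"
    using voronoi0_inner_le_l1_norm[OF TU x lattice_flows_add[OF \<gamma>(1) \<gamma>'(1)]] \<gamma> \<gamma>'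
    by (simp add: inner_add_right)
qed

lemma tight_sum:
  assumes "finite G" and conf: "\<And>\<gamma> \<gamma>'. \<gamma> \<in> G \<Longrightarrow> \<gamma>' \<in> G \<Longrightarrow> conformal \<gamma> \<gamma>'"
    and tight: "\<And>\<gamma>. \<gamma> \<in> G \<Longrightarrow> 2 * (x \<bullet> \<gamma>) = l1_norm \<gamma>"
  shows "2 * (x \<bullet> \<Sum>G) = l1_norm (\<Sum>G)"
  using assms
proof (induction G rule: finite_induct)
  case (insert \<gamma> G)
  have "conformal \<gamma> (\<Sum>G)"
    using insert.prems(1) by (auto simp: conformal_def sum_distrib_left intro!: sum_nonneg)
  then show ?case
    using insert by (simp add: inner_add_right l1_norm_add_conformal)
qed (simp add: l1_norm_def)

text \<open>The sum \<open>\<sigma>\<close> of the covering flows dominates \<open>\<lambda>\<close> coordinatewise with the same signs, so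
\<open>\<lambda>\<close> and \<open>\<sigma> - \<lambda>\<close> are conformal.\<close>
lemma tight_if_conformally_covered:
  fixes M :: "real^'e::finite^'r::finite"
  assumes TU: "totally_unimodular M" and x: "x \<in> voronoi0 M"
    and G: "finite G" "G \<subseteq> lattice_flows M"
    and conf: "\<And>\<gamma> \<gamma>'. \<gamma> \<in> G \<Longrightarrow> \<gamma>' \<in> G \<Longrightarrow> conformal \<gamma> \<gamma>'"
    and tight: "\<And>\<gamma>. \<gamma> \<in> G \<Longrightarrow> 2 * (x \<bullet> \<gamma>) = l1_norm \<gamma>"
    and lam: "lam \<in> lattice_flows M" "ternary lam"
    and cover: "\<And>e. lam $ e \<noteq> 0 \<Longrightarrow> \<exists>\<gamma>\<in>G. 0 < \<gamma> $ e * lam $ e"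
  shows "2 * (x \<bullet> lam) = l1_norm lam"
proof (rule tight_summand[OF TU x lam(1)])
  define \<sigma> where "\<sigma> = \<Sum>G"
  have \<sigma>: "\<sigma> \<in> lattice_flows M" using lattice_flows_sum[OF G] by (simp add: \<sigma>_def)
  show "\<sigma> - lam \<in> lattice_flows M" using lattice_flows_diff[OF \<sigma> lam(1)] .
  show "2 * (x \<bullet> (lam + (\<sigma> - lam))) = l1_norm (lam + (\<sigma> - lam))"
    using tight_sum[OF G(1) conf tight] by (simp add: \<sigma>_def)
  show "conformal lam (\<sigma> - lam)"
  proof (rule conformal_diff_ternary[OF lam(2)])
    show "\<sigma> $ e \<in> \<int>" for e using \<sigma> by (simp add: lattice_flows_def)
    fix e assume "lam $ e \<noteq> 0"
    then obtain \<gamma> where "\<gamma> \<in> G" and \<gamma>lam: "0 < \<gamma> $ e * lam $ e" using cover by blast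
    have "0 < \<gamma> $ e * \<gamma> $ e" using \<gamma>lam by (auto simp: zero_less_mult_iff)
    also have "\<dots> \<le> (\<Sum>\<gamma>'\<in>G. \<gamma>' $ e * \<gamma> $ e)"
      using \<open>\<gamma> \<in> G\<close> G(1) conf by (intro member_le_sum) (auto simp: conformal_def mult.commute)
    also have "\<dots> = \<sigma> $ e * \<gamma> $ e" by (simp add: \<sigma>_def sum_distrib_right)
    finally have "0 < \<sigma> $ e * lam $ e" using \<gamma>lam by (rule zero_less_mult_trans)
    then show "0 < lam $ e * \<sigma> $ e" by (simp add: mult.commute)
  qed
qed

section \<open>Circuits and the faces of the Voronoi cell\<close>

lemma circuits_ternary: "\<gamma> \<in> circuits M \<Longrightarrow> ternary \<gamma>"
  by (simp add: circuits_def ternary_def)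

lemma circuits_lattice_flows: "\<gamma> \<in> circuits M \<Longrightarrow> \<gamma> \<in> lattice_flows M"
  by (simp add: circuits_def)

lemma finite_circuits: "finite (circuits (M :: real^'e::finite^'r))"
proof (rule finite_subset)
  show "circuits M \<subseteq> vec_nth -` PiE UNIV (\<lambda>_. {-1,0,1})"
    by (auto simp: circuits_def)
  show "finite (vec_nth -` PiE UNIV (\<lambda>_. {-1::real,0,1}))"
    by (intro finite_vimageI finite_PiE) (auto intro: injI simp: vec_nth_inject)
qed

lemma hyperplane_F_circuit:
  "\<gamma> \<in> circuits M \<Longrightarrow> hyperplane_F M \<gamma> = {x \<in> flows M. 2 * (x \<bullet> \<gamma>) = l1_norm \<gamma>}"
  by (simp add: hyperplane_F_def norm_sq_eq_l1_norm circuits_ternary)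

lemma U_face_conformal:
  fixes M :: "real^'e::finite^'r::finite"
  assumes TU: "totally_unimodular M" and "F \<subseteq> voronoi0 M" "F \<noteq> {}"
    and "\<gamma> \<in> U_face M F" "\<gamma>' \<in> U_face M F"
  shows "conformal \<gamma> \<gamma>'"
proof -
  obtain x where "x \<in> F" using assms by blast
  then show ?thesis
    using assms by (intro tight_flows_conformal[OF TU, of x])
      (auto simp: U_face_def hyperplane_F_circuit circuits_lattice_flows)
qed

lemma sc_le_phi_iff:
  assumes conf: "\<And>\<gamma> \<gamma>'. \<gamma> \<in> U_face M F \<Longrightarrow> \<gamma>' \<in> U_face M F \<Longrightarrow> conformal \<gamma> \<gamma>'"
  shows "sc_le (phi M F) (N_of lam) \<longleftrightarrow> (\<forall>e. lam $ e \<noteq> 0 \<longrightarrow> (\<exists>\<gamma>\<in>U_face M F. 0 < \<gamma> $ e * lam $ e))"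
proof -
  define S where "S = (\<Union>\<gamma>\<in>U_face M F. supp \<gamma>)"
  define ch where "ch e = (SOME \<gamma>. \<gamma> \<in> U_face M F \<and> e \<in> supp \<gamma>)" for e
  have ch: "ch e \<in> U_face M F" "ch e $ e \<noteq> 0" if "e \<in> S" for e
    using someI_ex[of "\<lambda>\<gamma>. \<gamma> \<in> U_face M F \<and> e \<in> supp \<gamma>"] that
    by (auto simp: ch_def S_def supp_def)
  have sgn_eq: "sgn a = sgn b \<longleftrightarrow> 0 < a * b" if "a \<noteq> 0" "b \<noteq> 0" for a b :: real
    using that by (auto simp: sgn_if zero_less_mult_iff)
  have "phi M F = (S, \<lambda>e. if e \<in> S then sgn (ch e $ e) else 0)"
    unfolding phi_def S_def ch_def by simp
  then have "sc_le (phi M F) (N_of lam) \<longleftrightarrow>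
      (\<forall>e. lam $ e \<noteq> 0 \<longrightarrow> e \<in> S \<and> sgn (ch e $ e) = sgn (lam $ e))"
    by (auto simp: sc_le_def N_of_def supp_def)
  also have "\<dots> \<longleftrightarrow> (\<forall>e. lam $ e \<noteq> 0 \<longrightarrow> (\<exists>\<gamma>\<in>U_face M F. 0 < \<gamma> $ e * lam $ e))"
  proof (intro iffI allI impI)
    fix e assume "\<forall>e. lam $ e \<noteq> 0 \<longrightarrow> e \<in> S \<and> sgn (ch e $ e) = sgn (lam $ e)" "lam $ e \<noteq> 0"
    then show "\<exists>\<gamma>\<in>U_face M F. 0 < \<gamma> $ e * lam $ e" using ch sgn_eq by blast
  next
    fix e assume "\<forall>e. lam $ e \<noteq> 0 \<longrightarrow> (\<exists>\<gamma>\<in>U_face M F. 0 < \<gamma> $ e * lam $ e)"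
      and "lam $ e \<noteq> 0"
    then obtain \<gamma> where \<gamma>: "\<gamma> \<in> U_face M F" "0 < \<gamma> $ e * lam $ e" by blast
    then have "\<gamma> $ e \<noteq> 0" by auto
    with \<gamma>(1) have "e \<in> S" unfolding S_def supp_def by blast
    have "0 \<le> ch e $ e * \<gamma> $ e"
      using conf[OF ch(1)[OF \<open>e \<in> S\<close>] \<gamma>(1)] by (simp add: conformal_def)
    with ch(2)[OF \<open>e \<in> S\<close>] \<open>\<gamma> $ e \<noteq> 0\<close> have "0 < ch e $ e * \<gamma> $ e"
      by (simp add: less_le)
    then have "0 < ch e $ e * lam $ e" using \<gamma>(2) by (rule zero_less_mult_trans)
    with \<open>e \<in> S\<close> ch(2) \<open>lam $ e \<noteq> 0\<close> show "e \<in> S \<and> sgn (ch e $ e) = sgn (lam $ e)"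
      using sgn_eq by blast
  qed
  finally show ?thesis .
qed

theorem mainTheorem13:
  fixes M :: "real^'e::finite^'r::finite" and F :: "(real^'e) set" and lam :: "real^'e"
  assumes "totally_unimodular M"
    and "F face_of voronoi0 M" and "F \<noteq> {}"
    and "lam \<in> circuits M"
  shows "lam \<in> U_face M F \<longleftrightarrow> sc_le (phi M F) (N_of lam)"
proof -
  have FV: "F \<subseteq> voronoi0 M" using assms(2) by (rule face_of_imp_subset)
  note conf = U_face_conformal[OF assms(1) FV assms(3)]
  have finU: "finite (U_face M F)" by (rule finite_subset[OF _ finite_circuits]) (auto simp: U_face_def)
  have latU: "U_face M F \<subseteq> lattice_flows M" by (auto simp: U_face_def circuits_lattice_flows)
  have tightU: "2 * (x \<bullet> \<gamma>) = l1_norm \<gamma>" if "\<gamma> \<in> U_face M F" "x \<in> F" for x \<gamma>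
    using that by (auto simp: U_face_def hyperplane_F_circuit)
  have lam: "lam \<in> lattice_flows M" "ternary lam"
    using assms(4) by (simp_all add: circuits_lattice_flows circuits_ternary)
  have "lam \<in> U_face M F \<longleftrightarrow> (\<forall>e. lam $ e \<noteq> 0 \<longrightarrow> (\<exists>\<gamma>\<in>U_face M F. 0 < \<gamma> $ e * lam $ e))"
  proof (intro iffI allI impI)
    assume cover: "\<forall>e. lam $ e \<noteq> 0 \<longrightarrow> (\<exists>\<gamma>\<in>U_face M F. 0 < \<gamma> $ e * lam $ e)"
    have "x \<in> hyperplane_F M lam" if "x \<in> F" for x
    proof -
      have xV: "x \<in> voronoi0 M" using FV that by blast
      have "2 * (x \<bullet> lam) = l1_norm lam"
        by (rule tight_if_conformally_covered[OF assms(1) xV finU latU conf tightU[OF _ that] lam])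
          (use cover in blast)+
      with xV show ?thesis by (simp add: hyperplane_F_circuit[OF assms(4)] voronoi0_def)
    qed
    with assms(4) show "lam \<in> U_face M F" by (auto simp: U_face_def)
  next
    fix e assume "lam \<in> U_face M F" "lam $ e \<noteq> 0"
    moreover from \<open>lam $ e \<noteq> 0\<close> have "0 < lam $ e * lam $ e"
      using not_real_square_gt_zero by blast
    ultimately show "\<exists>\<gamma>\<in>U_face M F. 0 < \<gamma> $ e * lam $ e" by blast
  qed
  with sc_le_phi_iff[of M F lam, OF conf] show ?thesis by simp
qed

end
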